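(* Let $\mathcal{X}=\mathbb{R}^{d_\mathcal{X}}$, $\Theta=\mathbb{R}^{d_\Theta}$, $\beta>0$, observations $x^o_1,\dots,x^o_n$, and Gaussian prior $\pi(\theta)\propto\mathcal{N}(\theta;\mu,\Sigma)$ with $\Sigma$ positive definite. Suppose: (A1) $w:\mathcal{X}\to\mathbb{R}_+$ is twice continuously differentiable with $\sup_xw(x)<\infty$ and $\sup_x\|\nabla_xw(x)\|_2<\infty$; (A3) $q(x\mid\theta)\propto\exp(T(x)^\top\theta+b(x))$ with $T:\mathcal{X}\to\mathbb{R}^{d_\Theta}$, $b:\mathcal{X}\to\mathbb{R}$ twice differentiable and $q(\cdot\mid\theta)$ a probability density for each $\theta$; (A5) there exist $C,C'<\infty$ such that for all $x\in\mathcal{X}$, $$\max\Big\{\big(\|\nabla_xT(x)\|_F\|\nabla_xb(x)\|_2\big)^{1/2},\ \|\nabla_x^2T(x)\|_F^{1/2},\ \|\nabla_xT(x)\|_F\Big\}\le C\,w(x)^{-1},\qquad \|\nabla_xT(x)\|_F\le C'\|\nabla_xw(x)^2\|_2^{-1}.$$ Fix $j\in\{1,\dots,n\}$ and for $x_j^c\in\mathcal{X}$ let $x^c_{1:n}$ be the dataset obtained from $x^o_{1:n}$ by replacing $x_j^o$ with $x_j^c$. Then $$\sup_{x_j^c\in\mathbb{R}^{d_\mathcal{X}}}\mathrm{KL}\Big(\pi_{\mathrm{NSM}}(\cdot\mid x^o_{1:n})\,\Big\|\,\pi_{\mathrm{NSM}}(\cdot\mid x^c_{1:n})\Big)<\i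nfty.$$
   Context: $\nabla_xT(x)\in\mathbb{R}^{d_\Theta\times d_\mathcal{X}}$ has entries $\partial T_k/\partial x_j$; $\nabla_x^2T(x)$ is the array of all second derivatives $\partial^2T_k/\partial x_j\partial x_l$; $\|\cdot\|_F$ is the Frobenius (square root of sum of squared entries) norm; $\nabla_xw(x)^2$ is the gradient of $x\mapsto w(x)^2$; $1/0=\infty$. For any dataset $y_{1:n}$, the NSM-Bayes posterior is $\pi_{\mathrm{NSM}}(\theta\mid y_{1:n})\propto\exp(-\beta n\mathcal{L}_{\mathrm{NSM}}(\theta;y_{1:n}))\pi(\theta)$ with $$\mathcal{L}_{\mathrm{NSM}}(\theta;y_{1:n})=\frac1n\sum_{i=1}^n\Big[w(y_i)^2\|\nabla_x\log q(y_i\mid\theta)\|_2^2+2(\nabla_xw(y_i)^2)^\top\nabla_x\log q(y_i\mid\theta)+2w(y_i)^2\mathrm{Tr}\,\nabla_x^2\log q(y_i\mid\theta)\Big].$$ Under (A3) and the Gaussian prior this posterior is Gaussian, $\mathcal{N}(\theta;\mu_n,\Sigma_n)$, with $\Sigma_n^{-1}=\Sigma^{-1}+2\beta\sum_i w(y_i)^2\nabla_xT(y_i)\nabla_xT(y_i)^\top$ and $\mu_n=\Sigma_n(\Sigma^{-1}\mu-2\beta\sum_i[w(y_i)^2\nabla_xT(y_i)\nabla_xb(y_i)+d(y_i)])$, where $d(y)_k=\sum_{j}\partial_{x_j}(w(y)^2\partial T_k(y)/\partial x_j)$. *)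

theory Defs
  imports "HOL-Analysis.Analysis"
begin

definition pd :: "'n::finite \<Rightarrow> (real^'n \<Rightarrow> real) \<Rightarrow> real^'n \<Rightarrow> real" where
  "pd j f x = deriv (\<lambda>t. f (x + t *\<^sub>R axis j 1)) 0"

text \<open>Gradient (Euclidean norm of a real^'n is the 2-norm).\<close>
definition grad :: "(real^'n::finite \<Rightarrow> real) \<Rightarrow> real^'n \<Rightarrow> real^'n" where
  "grad f x = (\<chi> j. pd j f x)"

text \<open>Jacobian nabla_x T(x), entries dT_k/dx_j; the norm on real^'n^'m is the Frobenius norm.\<close>
definition jac :: "(real^'n::finite \<Rightarrow> real^'m::finite) \<Rightarrow> real^'n \<Rightarrow> real^'n^'m" where
  "jac T x = (\<chi> k j. pd j (\<lambda>y. T y $ k) x)"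

text \<open>Array of second derivatives d^2 T_k / dx_j dx_l; norm = Frobenius norm.\<close>
definition hess_arr :: "(real^'n::finite \<Rightarrow> real^'m::finite) \<Rightarrow> real^'n \<Rightarrow> real^'n^'n^'m" where
  "hess_arr T x = (\<chi> k j l. pd l (\<lambda>y. pd j (\<lambda>z. T z $ k) y) x)"

definition lap :: "(real^'n::finite \<Rightarrow> real) \<Rightarrow> real^'n \<Rightarrow> real" where
  "lap f x = (\<Sum>j\<in>UNIV. pd j (pd j f) x)"

definition twice_differentiable :: "(real^'n::finite \<Rightarrow> real) \<Rightarrow> bool" where
  "twice_differentiable f \<longleftrightarrow> (\<forall>x. f differentiable at x) \<and> (\<forall>j x. pd j f differentiable at x)"

definition twice_cont_differentiable :: "(real^'n::finite \<Rightarrow> real) \<Rightarrow> bool" where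
  "twice_cont_differentiable f \<longleftrightarrow> twice_differentiable f \<and>
     (\<forall>i j. continuous_on UNIV (pd i (pd j f)))"

definition twice_differentiable_vec :: "(real^'n::finite \<Rightarrow> real^'m::finite) \<Rightarrow> bool" where
  "twice_differentiable_vec T \<longleftrightarrow> (\<forall>x. T differentiable at x) \<and>
     (\<forall>k. twice_differentiable (\<lambda>x. T x $ k))"

definition expfam :: "(real^'n::finite \<Rightarrow> real^'m::finite) \<Rightarrow> (real^'n \<Rightarrow> real) \<Rightarrow> real^'m \<Rightarrow> real^'n \<Rightarrow> real" where
  "expfam T b \<theta> x = exp (T x \<bullet> \<theta> + b x) / (\<integral>y. exp (T y \<bullet> \<theta> + b y) \<partial>lborel)"

definition L_NSM :: "(real^'n::finite \<Rightarrow> real) \<Rightarrow> (real^'m::finite \<Rightarrow> real^'n \<Rightarrow> real)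
    \<Rightarrow> nat \<Rightarrow> (nat \<Rightarrow> real^'n) \<Rightarrow> real^'m \<Rightarrow> real" where
  "L_NSM w q n ys \<theta> = (1 / real n) * (\<Sum>i=1..n.
      (w (ys i))^2 * (norm (grad (\<lambda>x. ln (q \<theta> x)) (ys i)))^2
    + 2 * (grad (\<lambda>x. (w x)^2) (ys i) \<bullet> grad (\<lambda>x. ln (q \<theta> x)) (ys i))
    + 2 * (w (ys i))^2 * lap (\<lambda>x. ln (q \<theta> x)) (ys i))"

definition gauss_unnorm :: "real^'m::finite \<Rightarrow> real^'m^'m \<Rightarrow> real^'m \<Rightarrow> real" where
  "gauss_unnorm \<mu> \<Sigma> \<theta> = exp (-(1/2) * ((\<theta> - \<mu>) \<bullet> (matrix_inv \<Sigma> *v (\<theta> - \<mu>))))"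

definition pos_def :: "real^'m::finite^'m \<Rightarrow> bool" where
  "pos_def A \<longleftrightarrow> transpose A = A \<and> (\<forall>v. v \<noteq> 0 \<longrightarrow> v \<bullet> (A *v v) > 0)"

definition post_NSM :: "real \<Rightarrow> (real^'n::finite \<Rightarrow> real) \<Rightarrow> (real^'m::finite \<Rightarrow> real^'n \<Rightarrow> real)
    \<Rightarrow> real^'m \<Rightarrow> real^'m^'m \<Rightarrow> nat \<Rightarrow> (nat \<Rightarrow> real^'n) \<Rightarrow> real^'m \<Rightarrow> real" where
  "post_NSM \<beta> w q \<mu> \<Sigma> n ys \<theta> =
     exp (- \<beta> * real n * L_NSM w q n ys \<theta>) * gauss_unnorm \<mu> \<Sigma> \<theta> /
     (\<integral>\<phi>. exp (- \<beta> * real n * L_NSM w q n ys \<phi>) * gauss_unnorm \<mu> \<Sigma> \<phi> \<partial>lborel)"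

definition KL :: "(real^'m::finite \<Rightarrow> real) \<Rightarrow> (real^'m \<Rightarrow> real) \<Rightarrow> ereal" where
  "KL p p' = (if integrable lborel (\<lambda>\<theta>. p \<theta> * ln (p \<theta> / p' \<theta>))
              then ereal (\<integral>\<theta>. p \<theta> * ln (p \<theta> / p' \<theta>) \<partial>lborel) else \<infinity>)"

end

theory Submission
  imports Defs "HOL-Probability.Distributions"
begin

text \<open>For an exponential family, \<open>\<nabla> ln q\<close> and \<open>\<Delta> ln q\<close> are affine in \<open>\<theta>\<close>, so every
  summand of the NSM loss is a constant plus a polynomial in \<open>\<theta>\<close> whose quadratic part
  \<open>w\<^sup>2 \<parallel>\<theta>\<^sup>T \<nabla>T\<parallel>\<^sup>2\<close> is nonnegative; by (A5) this polynomial lies between \<open>-K \<parallel>\<theta>\<parallel>\<close> and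
  \<open>K (\<parallel>\<theta>\<parallel> + \<parallel>\<theta>\<parallel>\<^sup>2)\<close>, uniformly in the data point. The posterior is therefore a Gibbs
  density \<open>exp (-V) g / Z\<^sub>V\<close> with Gaussian \<open>g\<close>, and
  \<open>KL (p\<^sub>V \<parallel> p\<^sub>V\<^sub>') = E\<^sub>p\<^sub>V [V' - V] + ln Z\<^sub>V\<^sub>' - ln Z\<^sub>V\<close>. Replacing one observation changes
  \<open>V\<close> by at most a multiple of \<open>\<parallel>\<theta>\<parallel> + \<parallel>\<theta>\<parallel>\<^sup>2\<close>, whose expectation under the
  Gaussian-dominated \<open>p\<^sub>V\<close> is finite, and the linear lower bound on the potential bounds
  every normaliser \<open>Z\<^sub>V\<^sub>'\<close> by one Gaussian integral.\<close>

section \<open>Gaussian-dominated integrands\<close>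

lemma integrable_exp_neg_sq:
  fixes a :: real assumes a: "a > 0"
  shows "integrable lborel (\<lambda>x::real. exp (- a * x\<^sup>2))"
proof -
  define s where "s = 1 / sqrt (2 * a)"
  have s: "s > 0" using a by (simp add: s_def)
  have ss: "2 * s\<^sup>2 = 1 / a" using a by (simp add: s_def power_divide)
  have "integrable lborel (\<lambda>x. sqrt (2 * pi * s\<^sup>2) * normal_density 0 s x)"
    by (intro integrable_mult_right integrable_normal_density) (use s in simp)
  also have "(\<lambda>x. sqrt (2 * pi * s\<^sup>2) * normal_density 0 s x) = (\<lambda>x::real. exp (- a * x\<^sup>2))"
    using s a ss by (auto simp: normal_density_def field_simps)
  finally show ?thesis .
qed

lemma integrable_exp_neg_sq_norm:
  fixes a :: real assumes a: "a > 0"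
  shows "integrable lborel (\<lambda>x::'a::euclidean_space. exp (- a * (norm x)\<^sup>2))"
proof (rule integrableI_nonneg)
  show "(\<lambda>x::'a. exp (- a * (norm x)\<^sup>2)) \<in> borel_measurable lborel" by measurable
  show "AE x in lborel. 0 \<le> exp (- a * (norm (x::'a))\<^sup>2)" by simp
  have prod: "exp (- a * (norm x)\<^sup>2) = (\<Prod>b\<in>Basis. exp (- a * (x \<bullet> b)\<^sup>2))" for x :: 'a
  proof -
    have "(norm x)\<^sup>2 = (\<Sum>b\<in>Basis. (x \<bullet> b)\<^sup>2)"
      unfolding power2_norm_eq_inner by (subst euclidean_inner) (simp add: power2_eq_square)
    then show ?thesis by (simp add: sum_distrib_left exp_sum[symmetric] sum_negf)
  qed
  have fin: "(\<integral>\<^sup>+x. ennreal (exp (- a * x\<^sup>2)) \<partial>lborel) < \<infinity>"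
    using integrable_exp_neg_sq[OF a] by (simp add: integrable_iff_bounded)
  have "(\<integral>\<^sup>+x. ennreal (exp (- a * (norm (x::'a))\<^sup>2)) \<partial>lborel)
      = (\<integral>\<^sup>+x. (\<Prod>b\<in>(Basis::'a set). ennreal (exp (- a * (x \<bullet> b)\<^sup>2))) \<partial>lborel)"
    unfolding prod by (simp add: prod_ennreal)
  also have "\<dots> = (\<Prod>b\<in>(Basis::'a set). (\<integral>\<^sup>+x. ennreal (exp (- a * x\<^sup>2)) \<partial>lborel))"
    by (rule nn_integral_lborel_prod) auto
  also have "\<dots> < \<infinity>"
    using fin by (simp add: less_top[symmetric] ennreal_prod_eq_top power_eq_top_ennreal)
  finally show "(\<integral>\<^sup>+x. ennreal (exp (- a * (norm (x::'a))\<^sup>2)) \<partial>lborel) < \<infinity>" .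
qed

lemma quadratic_poly_le_exp:
  fixes t :: real assumes "t \<ge> 0"
  shows "1 + t + t\<^sup>2 \<le> 6 * exp t"
proof -
  have "1 + t/2 \<le> exp (t/2)" by (rule exp_ge_add_one_self)
  then have "(1 + t/2)\<^sup>2 \<le> (exp (t/2))\<^sup>2" using assms by (intro power_mono) auto
  also have "(exp (t/2))\<^sup>2 = exp t" by (simp add: power2_eq_square exp_add[symmetric])
  finally have "t\<^sup>2 \<le> 4 * exp t" using assms by (simp add: power2_eq_square field_simps)
  then show ?thesis using exp_ge_add_one_self[of t] exp_gt_zero[of t] by linarith
qed

lemma poly_exp_linear_le_gauss:
  fixes t K a :: real assumes a: "a > 0" and t: "t \<ge> 0"
  shows "(1 + t + t\<^sup>2) * exp (K * t - a * t\<^sup>2)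
           \<le> 6 * exp ((\<bar>K\<bar> + 1)\<^sup>2 / (2 * a)) * exp (- (a / 2) * t\<^sup>2)"
proof -
  define L where "L = \<bar>K\<bar> + 1"
  have "0 \<le> (L - a * t)\<^sup>2 / (2 * a)" using a by simp
  then have square: "L * t - a * t\<^sup>2 \<le> L\<^sup>2 / (2 * a) - (a / 2) * t\<^sup>2"
    using a by (simp add: power2_eq_square field_simps)
  have "K * t \<le> \<bar>K\<bar> * t" using t by (intro mult_right_mono) auto
  then have "t + (K * t - a * t\<^sup>2) \<le> L\<^sup>2 / (2 * a) - (a / 2) * t\<^sup>2"
    using square by (simp add: L_def algebra_simps)
  then have exp_le: "exp t * exp (K * t - a * t\<^sup>2) \<le> exp (L\<^sup>2 / (2 * a)) * exp (- (a / 2) * t\<^sup>2)"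
    by (simp add: exp_add[symmetric])
  have "(1 + t + t\<^sup>2) * exp (K * t - a * t\<^sup>2) \<le> 6 * (exp t * exp (K * t - a * t\<^sup>2))"
    using quadratic_poly_le_exp[OF t] by (simp add: mult.assoc[symmetric] mult_right_mono)
  also have "\<dots> \<le> 6 * (exp (L\<^sup>2 / (2 * a)) * exp (- (a / 2) * t\<^sup>2))"
    using exp_le by simp
  finally show ?thesis unfolding L_def by (simp only: mult.assoc)
qed

lemma integrable_bounded_by_poly_exp_quadratic:
  fixes f :: "'a::euclidean_space \<Rightarrow> real"
  assumes f: "f \<in> borel_measurable lborel" and a: "a > 0"
    and bound: "\<And>x. \<bar>f x\<bar> \<le> c * ((1 + norm x + (norm x)\<^sup>2) * exp (K * norm x - a * (norm x)\<^sup>2))"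
  shows "integrable lborel f"
proof (rule Bochner_Integration.integrable_bound[OF _ f])
  define B where "B = 6 * exp ((\<bar>K\<bar> + 1)\<^sup>2 / (2 * a))"
  show "integrable lborel (\<lambda>x::'a. \<bar>c\<bar> * B * exp (- (a/2) * (norm x)\<^sup>2))"
    using a by (intro integrable_mult_right integrable_exp_neg_sq_norm) simp
  show "AE x in lborel. norm (f x) \<le> norm (\<bar>c\<bar> * B * exp (- (a/2) * (norm x)\<^sup>2))"
  proof (rule AE_I2)
    fix x :: 'a
    have "\<bar>f x\<bar> \<le> \<bar>c\<bar> * ((1 + norm x + (norm x)\<^sup>2) * exp (K * norm x - a * (norm x)\<^sup>2))"
    proof -
      have "0 \<le> (1 + norm x + (norm x)\<^sup>2) * exp (K * norm x - a * (norm x)\<^sup>2)"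
        by (intro mult_nonneg_nonneg add_nonneg_nonneg) auto
      then show ?thesis using bound[of x] abs_ge_self[of c] by (meson mult_right_mono order_trans)
    qed
    also have "\<dots> \<le> \<bar>c\<bar> * (B * exp (- (a/2) * (norm x)\<^sup>2))"
      unfolding B_def by (intro mult_left_mono poly_exp_linear_le_gauss a) auto
    finally show "norm (f x) \<le> norm (\<bar>c\<bar> * B * exp (- (a/2) * (norm x)\<^sup>2))"
      by (simp add: abs_mult B_def mult.assoc)
  qed
qed

lemma integrable_exp_linear_minus_quadratic:
  fixes a K :: real assumes a: "a > 0"
  shows "integrable lborel (\<lambda>x::'a::euclidean_space. exp (K * norm x - a * (norm x)\<^sup>2))"
proof (rule integrable_bounded_by_poly_exp_quadratic[OF _ a, where c=1])
  fix x :: 'a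
  show "\<bar>exp (K * norm x - a * (norm x)\<^sup>2)\<bar>
      \<le> 1 * ((1 + norm x + (norm x)\<^sup>2) * exp (K * norm x - a * (norm x)\<^sup>2))"
    by (simp add: mult_le_cancel_right1 add_nonneg_nonneg)
qed measurable

lemma integral_lborel_pos:
  fixes f :: "'a::euclidean_space \<Rightarrow> real"
  assumes f: "integrable lborel f" and pos: "\<And>x. f x > 0"
  shows "integral\<^sup>L lborel f > 0"
proof -
  have "integral\<^sup>L lborel f \<noteq> 0"
  proof
    assume "integral\<^sup>L lborel f = 0"
    then have "AE x in lborel. f x = 0"
      using integral_nonneg_eq_0_iff_AE[OF f] pos by (simp add: less_imp_le)
    then have "AE x::'a in lborel. False" using pos by (auto elim: AE_mp simp: less_le)
    then show False by (simp add: ae_filter_eq_bot_iff trivial_limit_def[symmetric])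
  qed
  moreover have "integral\<^sup>L lborel f \<ge> 0" using pos by (simp add: less_imp_le)
  ultimately show ?thesis by simp
qed

section \<open>Gibbs densities\<close>

definition gibbs :: "('a::euclidean_space \<Rightarrow> real) \<Rightarrow> ('a \<Rightarrow> real) \<Rightarrow> 'a \<Rightarrow> real" where
  "gibbs V g \<theta> = exp (- V \<theta>) * g \<theta> / (\<integral>\<phi>. exp (- V \<phi>) * g \<phi> \<partial>lborel)"

lemma gibbs_add_const: "gibbs (\<lambda>\<theta>. c + V \<theta>) g = gibbs V g"
proof
  fix \<theta>
  have shift: "exp (- (c + V \<phi>)) * g \<phi> = exp (- c) * (exp (- V \<phi>) * g \<phi>)" for \<phi>
    by (simp add: exp_add[symmetric])
  show "gibbs (\<lambda>\<theta>. c + V \<theta>) g \<theta> = gibbs V g \<theta>"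
    unfolding gibbs_def shift integral_mult_right_zero by simp
qed

lemma gibbs_weight_le:
  assumes "0 \<le> g \<theta>" "g \<theta> \<le> A * exp (- a * (norm \<theta>)\<^sup>2)" "V \<theta> \<ge> - K * norm \<theta>"
  shows "exp (- V \<theta>) * g \<theta> \<le> A * exp (K * norm \<theta> - a * (norm \<theta>)\<^sup>2)"
proof -
  have "exp (- V \<theta>) * g \<theta> \<le> exp (K * norm \<theta>) * (A * exp (- a * (norm \<theta>)\<^sup>2))"
    using assms by (intro mult_mono) auto
  then show ?thesis by (simp add: exp_diff exp_minus field_simps)
qed

lemma integrable_gibbs_weight_mult:
  fixes V g h :: "'a::euclidean_space \<Rightarrow> real"
  assumes a: "a > 0"
    and g: "continuous_on UNIV g" "\<And>\<theta>. 0 \<le> g \<theta>" "\<And>\<theta>. g \<theta> \<le> A * exp (- a * (norm \<theta>)\<^sup>2)"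
    and V: "continuous_on UNIV V" "\<And>\<theta>. V \<theta> \<ge> - K * norm \<theta>"
    and h: "continuous_on UNIV h" "\<And>\<theta>. \<bar>h \<theta>\<bar> \<le> c * (1 + norm \<theta> + (norm \<theta>)\<^sup>2)"
  shows "integrable lborel (\<lambda>\<theta>. exp (- V \<theta>) * g \<theta> * h \<theta>)"
proof (rule integrable_bounded_by_poly_exp_quadratic[OF _ a])
  have "continuous_on UNIV (\<lambda>\<theta>. exp (- V \<theta>) * g \<theta> * h \<theta>)"
    by (intro continuous_intros g V h)
  then show "(\<lambda>\<theta>. exp (- V \<theta>) * g \<theta> * h \<theta>) \<in> borel_measurable lborel"
    using borel_measurable_continuous_onI by simp
  fix \<theta> :: 'a
  have weight: "exp (- V \<theta>) * g \<theta> \<le> A * exp (K * norm \<theta> - a * (norm \<theta>)\<^sup>2)"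
    using gibbs_weight_le[where g=g and V=V, OF g(2)[of \<theta>] g(3)[of \<theta>] V(2)[of \<theta>]] .
  have weight_nonneg: "0 \<le> exp (- V \<theta>) * g \<theta>" using g(2)[of \<theta>] by simp
  have "\<bar>exp (- V \<theta>) * g \<theta> * h \<theta>\<bar> = exp (- V \<theta>) * g \<theta> * \<bar>h \<theta>\<bar>"
    using g(2)[of \<theta>] by (simp add: abs_mult)
  also have "\<dots> \<le> A * exp (K * norm \<theta> - a * (norm \<theta>)\<^sup>2) * (c * (1 + norm \<theta> + (norm \<theta>)\<^sup>2))"
    by (rule mult_mono[OF weight h(2)]) (use weight weight_nonneg in auto)
  finally show "\<bar>exp (- V \<theta>) * g \<theta> * h \<theta>\<bar>
      \<le> A * c * ((1 + norm \<theta> + (norm \<theta>)\<^sup>2) * exp (K * norm \<theta> - a * (norm \<theta>)\<^sup>2))"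
    by (simp add: ac_simps)
qed

lemma KL_gibbs:
  fixes V V' g :: "real^'m::finite \<Rightarrow> real"
  assumes g: "\<And>\<theta>. g \<theta> > 0"
    and int: "integrable lborel (\<lambda>\<theta>. exp (- V \<theta>) * g \<theta>)"
    and int': "integrable lborel (\<lambda>\<theta>. exp (- V' \<theta>) * g \<theta>)"
    and int_diff: "integrable lborel (\<lambda>\<theta>. exp (- V \<theta>) * g \<theta> * (V' \<theta> - V \<theta>))"
  defines "Z \<equiv> \<integral>\<theta>. exp (- V \<theta>) * g \<theta> \<partial>lborel" and "Z' \<equiv> \<integral>\<theta>. exp (- V' \<theta>) * g \<theta> \<partial>lborel"
  shows "KL (gibbs V g) (gibbs V' g)
           = ereal ((\<integral>\<theta>. exp (- V \<theta>) * g \<theta> * (V' \<theta> - V \<theta>) \<partial>lborel) / Z + (ln Z' - ln Z))"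
proof -
  have Z: "Z > 0" and Z': "Z' > 0"
    unfolding Z_def Z'_def using g by (auto intro!: integral_lborel_pos int int')
  have integrand: "gibbs V g \<theta> * ln (gibbs V g \<theta> / gibbs V' g \<theta>)
      = exp (- V \<theta>) * g \<theta> * (V' \<theta> - V \<theta>) / Z + (ln Z' - ln Z) * (exp (- V \<theta>) * g \<theta> / Z)" for \<theta>
  proof -
    have log_ratio: "ln (gibbs V g \<theta> / gibbs V' g \<theta>) = (V' \<theta> - V \<theta>) + (ln Z' - ln Z)"
      unfolding gibbs_def Z_def[symmetric] Z'_def[symmetric]
      using g[of \<theta>] Z Z' by (simp add: ln_div ln_mult)
    show ?thesis
      unfolding log_ratio unfolding gibbs_def Z_def[symmetric] using Z by (simp add: field_simps)
  qed
  have "(\<integral>\<theta>. exp (- V \<theta>) * g \<theta> / Z \<partial>lborel) = 1"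
    using Z by (simp add: Z_def)
  then show ?thesis
    unfolding KL_def integrand using int int_diff by simp
qed

lemma gibbs_normaliser_bounds:
  fixes V g :: "'a::euclidean_space \<Rightarrow> real"
  assumes a: "a > 0"
    and g: "continuous_on UNIV g" "\<And>\<theta>. g \<theta> > 0" "\<And>\<theta>. g \<theta> \<le> A * exp (- a * (norm \<theta>)\<^sup>2)"
    and V: "continuous_on UNIV V" "\<And>\<theta>. V \<theta> \<ge> - K * norm \<theta>"
  shows "integrable lborel (\<lambda>\<theta>. exp (- V \<theta>) * g \<theta>)"
    and "0 < (\<integral>\<theta>. exp (- V \<theta>) * g \<theta> \<partial>lborel)"
    and "(\<integral>\<theta>. exp (- V \<theta>) * g \<theta> \<partial>lborel) \<le> A * (\<integral>\<theta>. exp (K * norm (\<theta>::'a) - a * (norm \<theta>)\<^sup>2) \<partial>lborel)"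
proof -
  have g_nonneg: "0 \<le> g \<theta>" for \<theta> using g(2) less_imp_le by blast
  have "integrable lborel (\<lambda>\<theta>. exp (- V \<theta>) * g \<theta> * 1)"
    by (rule integrable_gibbs_weight_mult[OF a g(1) g_nonneg g(3) V, where c=1]) auto
  then show int: "integrable lborel (\<lambda>\<theta>. exp (- V \<theta>) * g \<theta>)" by simp
  then show "0 < (\<integral>\<theta>. exp (- V \<theta>) * g \<theta> \<partial>lborel)"
    by (rule integral_lborel_pos) (auto intro: mult_pos_pos g(2))
  have "(\<integral>\<theta>. exp (- V \<theta>) * g \<theta> \<partial>lborel) \<le> (\<integral>\<theta>. A * exp (K * norm (\<theta>::'a) - a * (norm \<theta>)\<^sup>2) \<partial>lborel)"
    by (rule integral_mono[OF int integrable_mult_right[OF integrable_exp_linear_minus_quadratic[OF a]]])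
      (rule gibbs_weight_le[OF g_nonneg g(3) V(2)])
  then show "(\<integral>\<theta>. exp (- V \<theta>) * g \<theta> \<partial>lborel) \<le> A * (\<integral>\<theta>. exp (K * norm (\<theta>::'a) - a * (norm \<theta>)\<^sup>2) \<partial>lborel)"
    by simp
qed

lemma KL_gibbs_uniformly_bounded:
  fixes V :: "'y \<Rightarrow> real^'m::finite \<Rightarrow> real" and g :: "real^'m \<Rightarrow> real"
  assumes a: "a > 0"
    and g: "continuous_on UNIV g" "\<And>\<theta>. g \<theta> > 0" "\<And>\<theta>. g \<theta> \<le> A * exp (- a * (norm \<theta>)\<^sup>2)"
    and V: "\<And>y. continuous_on UNIV (V y)" "\<And>y \<theta>. V y \<theta> \<ge> - K * norm \<theta>"
    and V_diff: "\<And>y \<theta>. \<bar>V y \<theta> - V y\<^sub>0 \<theta>\<bar> \<le> K' * (norm \<theta> + (norm \<theta>)\<^sup>2)"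
  shows "\<exists>R. \<forall>y. KL (gibbs (V y\<^sub>0) g) (gibbs (V y) g) \<le> ereal R"
proof -
  note normaliser = gibbs_normaliser_bounds[OF a g V(1) V(2)]
  have g_nonneg: "0 \<le> g \<theta>" for \<theta> using g(2) less_imp_le by blast
  have poly_ge: "K' * (norm \<theta> + (norm \<theta>)\<^sup>2) \<le> \<bar>K'\<bar> * (1 + norm \<theta> + (norm \<theta>)\<^sup>2)" for \<theta> :: "real^'m"
  proof -
    have "K' * (norm \<theta> + (norm \<theta>)\<^sup>2) \<le> \<bar>K'\<bar> * (norm \<theta> + (norm \<theta>)\<^sup>2)"
      by (rule mult_right_mono) auto
    also have "\<dots> \<le> \<bar>K'\<bar> * (1 + norm \<theta> + (norm \<theta>)\<^sup>2)"
      by (rule mult_left_mono) auto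
    finally show ?thesis .
  qed
  have int_mult: "integrable lborel (\<lambda>\<theta>. exp (- V y\<^sub>0 \<theta>) * g \<theta> * h \<theta>)"
    if "continuous_on UNIV h" "\<And>\<theta>. \<bar>h \<theta>\<bar> \<le> \<bar>K'\<bar> * (1 + norm \<theta> + (norm \<theta>)\<^sup>2)" for h
    using integrable_gibbs_weight_mult[OF a g(1) g_nonneg g(3) V(1) V(2) that] .
  have int_diff: "integrable lborel (\<lambda>\<theta>. exp (- V y\<^sub>0 \<theta>) * g \<theta> * (V y \<theta> - V y\<^sub>0 \<theta>))" for y
    by (rule int_mult) (auto intro!: continuous_intros V(1) order_trans[OF V_diff poly_ge])
  define M where "M = (\<integral>\<theta>. exp (- V y\<^sub>0 \<theta>) * g \<theta> * (K' * (norm \<theta> + (norm \<theta>)\<^sup>2)) \<partial>lborel)"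
  have int_M: "integrable lborel (\<lambda>\<theta>. exp (- V y\<^sub>0 \<theta>) * g \<theta> * (K' * (norm \<theta> + (norm \<theta>)\<^sup>2)))"
    by (rule int_mult) (auto intro!: continuous_intros mult_left_mono simp: abs_mult)
  define Z where "Z y = (\<integral>\<theta>. exp (- V y \<theta>) * g \<theta> \<partial>lborel)" for y
  define Z\<^sub>B where "Z\<^sub>B = A * (\<integral>\<theta>. exp (K * norm (\<theta>::real^'m) - a * (norm \<theta>)\<^sup>2) \<partial>lborel)"
  show ?thesis
  proof (intro exI allI)
    fix y
    have "(\<integral>\<theta>. exp (- V y\<^sub>0 \<theta>) * g \<theta> * (V y \<theta> - V y\<^sub>0 \<theta>) \<partial>lborel) \<le> M"
      unfolding M_def using V_diff g_nonneg
      by (intro integral_mono int_diff int_M mult_left_mono) (auto simp: abs_le_iff)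
    then have "(\<integral>\<theta>. exp (- V y\<^sub>0 \<theta>) * g \<theta> * (V y \<theta> - V y\<^sub>0 \<theta>) \<partial>lborel) / Z y\<^sub>0 \<le> M / Z y\<^sub>0"
      using normaliser(2)[of y\<^sub>0] by (simp add: Z_def divide_right_mono)
    moreover have "ln (Z y) \<le> ln Z\<^sub>B"
      unfolding Z_def Z\<^sub>B_def using normaliser(3) normaliser(2) by (rule ln_mono)
    ultimately show "KL (gibbs (V y\<^sub>0) g) (gibbs (V y) g) \<le> ereal (M / Z y\<^sub>0 + (ln Z\<^sub>B - ln (Z y\<^sub>0)))"
      unfolding KL_gibbs[OF g(2) normaliser(1) normaliser(1) int_diff] Z_def[symmetric] by simp
  qed
qed

section \<open>The Gaussian prior\<close>

lemma pos_def_matrix_inv_quadratic_pos: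
  fixes \<Sigma> :: "real^'m::finite^'m"
  assumes pd: "pos_def \<Sigma>" and v: "v \<noteq> 0"
  shows "v \<bullet> (matrix_inv \<Sigma> *v v) > 0"
proof -
  have pos: "u \<noteq> 0 \<Longrightarrow> u \<bullet> (\<Sigma> *v u) > 0" for u using pd unfolding pos_def_def by auto
  then have "\<forall>u. \<Sigma> *v u = 0 \<longrightarrow> u = 0" by fastforce
  then have "invertible \<Sigma>"
    using invertible_left_inverse matrix_left_invertible_ker by blast
  then have "\<Sigma> ** matrix_inv \<Sigma> = mat 1"
    unfolding matrix_inv_def invertible_def by (rule someI2_ex) blast
  then have v_eq: "v = \<Sigma> *v (matrix_inv \<Sigma> *v v)" by (simp add: matrix_vector_mul_assoc)
  then have "matrix_inv \<Sigma> *v v \<noteq> 0" using v by auto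
  then have "(matrix_inv \<Sigma> *v v) \<bullet> (\<Sigma> *v (matrix_inv \<Sigma> *v v)) > 0" by (rule pos)
  then show ?thesis by (subst (asm) v_eq[symmetric]) (simp add: inner_commute)
qed

lemma quadratic_form_coercive:
  fixes S :: "real^'m::finite^'m"
  assumes pos: "\<And>v. v \<noteq> 0 \<Longrightarrow> v \<bullet> (S *v v) > 0"
  shows "\<exists>m>0. \<forall>v. m * (norm v)\<^sup>2 \<le> v \<bullet> (S *v v)"
proof -
  define Q where "Q v = v \<bullet> (S *v v)" for v :: "real^'m"
  have "continuous_on UNIV Q" unfolding Q_def by (intro continuous_intros)
  moreover have "sphere (0::real^'m) 1 \<noteq> {}" using norm_axis_1[of undefined] by auto
  ultimately obtain u where u: "u \<in> sphere (0::real^'m) 1" and u_min: "\<forall>v\<in>sphere 0 1. Q u \<le> Q v"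
    using continuous_attains_inf[OF compact_sphere] continuous_on_subset by blast
  have Q_scale: "Q (c *\<^sub>R v) = c\<^sup>2 * Q v" for c v
    unfolding Q_def by (simp add: matrix_vector_mult_scaleR power2_eq_square)
  have "Q u * (norm v)\<^sup>2 \<le> Q v" for v
  proof (cases "v = 0")
    case False
    then have "v = norm v *\<^sub>R ((1 / norm v) *\<^sub>R v)" by simp
    then have "Q v = (norm v)\<^sup>2 * Q ((1 / norm v) *\<^sub>R v)" using Q_scale by metis
    moreover have "Q u \<le> Q ((1 / norm v) *\<^sub>R v)" using u_min False by simp
    ultimately show ?thesis by (metis mult.commute mult_left_mono zero_le_power2)
  qed (simp add: Q_def)
  moreover have "Q u > 0" unfolding Q_def using u by (intro pos) auto
  ultimately show ?thesis unfolding Q_def by blast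
qed

lemma gauss_unnorm_le_gaussian:
  fixes \<Sigma> :: "real^'m::finite^'m"
  assumes "pos_def \<Sigma>"
  shows "\<exists>a>0. \<exists>A. \<forall>\<theta>. gauss_unnorm \<mu> \<Sigma> \<theta> \<le> A * exp (- a * (norm \<theta>)\<^sup>2)"
proof -
  obtain m where m: "m > 0" and quad: "\<And>v. m * (norm v)\<^sup>2 \<le> v \<bullet> (matrix_inv \<Sigma> *v v)"
    using quadratic_form_coercive[OF pos_def_matrix_inv_quadratic_pos[OF assms]] by blast
  have "gauss_unnorm \<mu> \<Sigma> \<theta> \<le> exp (m/2 * (norm \<mu>)\<^sup>2) * exp (- (m/4) * (norm \<theta>)\<^sup>2)" for \<theta>
  proof -
    have "norm \<theta> \<le> norm (\<theta> - \<mu>) + norm \<mu>" using norm_triangle_sub[of \<theta> \<mu>] by linarith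
    then have "(norm \<theta>)\<^sup>2 \<le> (norm (\<theta> - \<mu>) + norm \<mu>)\<^sup>2" by (intro power_mono) auto
    also have "\<dots> \<le> 2 * (norm (\<theta> - \<mu>))\<^sup>2 + 2 * (norm \<mu>)\<^sup>2"
      using zero_le_power2[of "norm (\<theta> - \<mu>) - norm \<mu>"] by (simp add: power2_eq_square algebra_simps)
    finally have "-(1/2) * (m * (norm (\<theta> - \<mu>))\<^sup>2) \<le> m/2 * (norm \<mu>)\<^sup>2 + (- (m/4) * (norm \<theta>)\<^sup>2)"
      using m by (subst (asm) mult_le_cancel_left_pos[of m, symmetric]) (auto simp: algebra_simps)
    then have "-(1/2) * ((\<theta> - \<mu>) \<bullet> (matrix_inv \<Sigma> *v (\<theta> - \<mu>))) \<le> m/2 * (norm \<mu>)\<^sup>2 + (- (m/4) * (norm \<theta>)\<^sup>2)"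
      using quad[of "\<theta> - \<mu>"] by linarith
    then show ?thesis unfolding gauss_unnorm_def by (simp add: exp_add[symmetric])
  qed
  moreover have "m / 4 > 0" using m by simp
  ultimately show ?thesis by blast
qed

lemma continuous_on_gauss_unnorm: "continuous_on UNIV (gauss_unnorm \<mu> \<Sigma>)"
proof -
  have "continuous_on UNIV (\<lambda>\<theta>. matrix_inv \<Sigma> *v (\<theta> - \<mu>))"
    by (rule continuous_on_compose2[OF matrix_vector_mult_linear_continuous_on _ subset_UNIV])
      (intro continuous_intros)
  then show ?thesis unfolding gauss_unnorm_def by (intro continuous_intros)
qed

section \<open>The NSM loss of an exponential family\<close>

lemma has_real_derivative_pd:
  fixes f :: "real^'n::finite \<Rightarrow> real"
  assumes "f differentiable at x"
  shows "((\<lambda>t. f (x + t *\<^sub>R axis j 1)) has_real_derivative pd j f x) (at 0)"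
proof -
  have "(\<lambda>t::real. x + t *\<^sub>R axis j 1) differentiable at 0" by (intro derivative_intros)
  then have "(\<lambda>t. f (x + t *\<^sub>R axis j 1)) differentiable at 0"
    using differentiable_compose[of f "\<lambda>t. x + t *\<^sub>R axis j 1" 0] assms by simp
  then show ?thesis unfolding pd_def using DERIV_deriv_iff_real_differentiable by blast
qed

lemma pd_eqI:
  assumes "((\<lambda>t. f (x + t *\<^sub>R axis j 1)) has_real_derivative D) (at 0)"
  shows "pd j f x = D"
  unfolding pd_def using assms by (rule DERIV_imp_deriv)

lemma pd_affine_combination:
  fixes f :: "'k::finite \<Rightarrow> real^'n::finite \<Rightarrow> real" and g :: "real^'n \<Rightarrow> real"
  assumes "\<And>k. f k differentiable at x" "g differentiable at x"
  shows "pd j (\<lambda>y. (\<Sum>k\<in>UNIV. c k * f k y) + g y + d) x = (\<Sum>k\<in>UNIV. c k * pd j (f k) x) + pd j g x"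
  by (rule pd_eqI) (use assms in \<open>auto intro!: derivative_eq_intros has_real_derivative_pd simp: mult.commute\<close>)

lemma pd_ln_expfam:
  fixes T :: "real^'n::finite \<Rightarrow> real^'m::finite"
  assumes T: "\<And>k. (\<lambda>x. T x $ k) differentiable at x" and b: "b differentiable at x"
    and q_density: "integrable lborel (\<lambda>x. exp (T x \<bullet> \<theta> + b x))"
  shows "pd j (\<lambda>x. ln (expfam T b \<theta> x)) x = (\<Sum>k\<in>UNIV. \<theta> $ k * pd j (\<lambda>x. T x $ k) x) + pd j b x"
proof -
  define Z where "Z = (\<integral>y. exp (T y \<bullet> \<theta> + b y) \<partial>lborel)"
  have "Z > 0" unfolding Z_def using q_density by (intro integral_lborel_pos) auto
  then have "(\<lambda>x. ln (expfam T b \<theta> x)) = (\<lambda>x. (\<Sum>k\<in>UNIV. \<theta> $ k * T x $ k) + b x + - ln Z)"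
    unfolding expfam_def Z_def[symmetric] by (simp add: ln_div inner_vec_def mult.commute)
  then show ?thesis
    using pd_affine_combination[of "\<lambda>k x. T x $ k" x b j "\<lambda>k. \<theta> $ k" "- ln Z", OF T b] by simp
qed

lemma grad_ln_expfam:
  fixes T :: "real^'n::finite \<Rightarrow> real^'m::finite"
  assumes "twice_differentiable_vec T" "twice_differentiable b"
    and "integrable lborel (\<lambda>x. exp (T x \<bullet> \<theta> + b x))"
  shows "grad (\<lambda>x. ln (expfam T b \<theta> x)) z = \<theta> v* jac T z + grad b z"
  using assms
  by (simp add: grad_def jac_def vector_matrix_mult_def vec_eq_iff pd_ln_expfam mult.commute
      twice_differentiable_vec_def twice_differentiable_def)

lemma lap_ln_expfam:
  fixes T :: "real^'n::finite \<Rightarrow> real^'m::finite"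
  assumes T: "twice_differentiable_vec T" and b: "twice_differentiable b"
    and q_density: "integrable lborel (\<lambda>x. exp (T x \<bullet> \<theta> + b x))"
  shows "lap (\<lambda>x. ln (expfam T b \<theta> x)) z = \<theta> \<bullet> (\<chi> k. lap (\<lambda>x. T x $ k) z) + lap b z"
proof -
  have T1: "\<And>k x. (\<lambda>x. T x $ k) differentiable at x"
    and T2: "\<And>k j x. pd j (\<lambda>x. T x $ k) differentiable at x"
    and b1: "\<And>x. b differentiable at x" and b2: "\<And>j x. pd j b differentiable at x"
    using T b unfolding twice_differentiable_vec_def twice_differentiable_def by auto
  have "pd j (pd j (\<lambda>x. ln (expfam T b \<theta> x))) z
      = (\<Sum>k\<in>UNIV. \<theta> $ k * pd j (pd j (\<lambda>x. T x $ k)) z) + pd j (pd j b) z" for j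
  proof -
    have "pd j (\<lambda>x. ln (expfam T b \<theta> x)) = (\<lambda>x. (\<Sum>k\<in>UNIV. \<theta> $ k * pd j (\<lambda>x. T x $ k) x) + pd j b x)"
      using pd_ln_expfam[OF T1 b1 q_density] by blast
    then show ?thesis using pd_affine_combination[OF T2 b2, where d=0] by simp
  qed
  then have "lap (\<lambda>x. ln (expfam T b \<theta> x)) z
      = (\<Sum>j\<in>UNIV. \<Sum>k\<in>UNIV. \<theta> $ k * pd j (pd j (\<lambda>x. T x $ k)) z) + lap b z"
    unfolding lap_def by (simp only: sum.distrib)
  also have "(\<Sum>j\<in>UNIV. \<Sum>k\<in>UNIV. \<theta> $ k * pd j (pd j (\<lambda>x. T x $ k)) z) = \<theta> \<bullet> (\<chi> k. lap (\<lambda>x. T x $ k) z)"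
    unfolding lap_def inner_vec_def vec_lambda_beta inner_real_def sum_distrib_left by (rule sum.swap)
  finally show ?thesis .
qed

text \<open>The \<open>\<theta>\<close>-dependent part of an NSM summand for \<open>expfam T b\<close>: with
  \<open>\<nabla> ln q = \<theta> v* \<nabla>T + \<nabla>b\<close> and \<open>\<Delta> ln q = \<theta> \<bullet> \<Delta>T + \<Delta>b\<close>, the summand at \<open>\<theta>\<close> is the
  summand at \<open>0\<close> plus this polynomial.\<close>
definition nsm_quadratic ::
    "(real^'n::finite \<Rightarrow> real) \<Rightarrow> (real^'n \<Rightarrow> real^'m::finite) \<Rightarrow> (real^'n \<Rightarrow> real) \<Rightarrow> real^'n \<Rightarrow> real^'m \<Rightarrow> real" where
  "nsm_quadratic w T b z \<theta> =
     (w z)\<^sup>2 * ((norm (\<theta> v* jac T z))\<^sup>2 + 2 * ((\<theta> v* jac T z) \<bullet> grad b z))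
     + 2 * (grad (\<lambda>x. (w x)\<^sup>2) z \<bullet> (\<theta> v* jac T z))
     + 2 * (w z)\<^sup>2 * (\<theta> \<bullet> (\<chi> k. lap (\<lambda>x. T x $ k) z))"

lemma L_NSM_expfam:
  fixes T :: "real^'n::finite \<Rightarrow> real^'m::finite"
  assumes n: "n > 0" and T: "twice_differentiable_vec T" and b: "twice_differentiable b"
    and q_density: "\<forall>\<theta>. integrable lborel (\<lambda>x. exp (T x \<bullet> \<theta> + b x))"
  shows "real n * L_NSM w (expfam T b) n ys \<theta>
           = real n * L_NSM w (expfam T b) n ys 0 + (\<Sum>i=1..n. nsm_quadratic w T b (ys i) \<theta>)"
proof -
  have summand: "(w z)\<^sup>2 * (norm (grad (\<lambda>x. ln (expfam T b \<phi> x)) z))\<^sup>2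
      + 2 * (grad (\<lambda>x. (w x)\<^sup>2) z \<bullet> grad (\<lambda>x. ln (expfam T b \<phi> x)) z)
      + 2 * (w z)\<^sup>2 * lap (\<lambda>x. ln (expfam T b \<phi> x)) z
    = (w z)\<^sup>2 * (norm (grad b z))\<^sup>2 + 2 * (grad (\<lambda>x. (w x)\<^sup>2) z \<bullet> grad b z) + 2 * (w z)\<^sup>2 * lap b z
      + nsm_quadratic w T b z \<phi>" for z \<phi>
    unfolding grad_ln_expfam[OF T b q_density[rule_format]] lap_ln_expfam[OF T b q_density[rule_format]]
      nsm_quadratic_def power2_norm_eq_inner
    by (simp add: inner_add_left inner_add_right inner_commute algebra_simps)
  show ?thesis
    unfolding L_NSM_def summand sum.distrib using n by (simp add: nsm_quadratic_def)
qed

lemma post_NSM_expfam: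
  fixes T :: "real^'n::finite \<Rightarrow> real^'m::finite"
  assumes "n > 0" "twice_differentiable_vec T" "twice_differentiable b"
    and "\<forall>\<theta>. integrable lborel (\<lambda>x. exp (T x \<bullet> \<theta> + b x))"
  shows "post_NSM \<beta> w (expfam T b) \<mu> \<Sigma> n ys
           = gibbs (\<lambda>\<theta>. \<beta> * (\<Sum>i=1..n. nsm_quadratic w T b (ys i) \<theta>)) (gauss_unnorm \<mu> \<Sigma>)"
proof -
  have shift: "\<beta> * real n * L_NSM w (expfam T b) n ys \<theta>
      = \<beta> * (real n * L_NSM w (expfam T b) n ys 0) + \<beta> * (\<Sum>i=1..n. nsm_quadratic w T b (ys i) \<theta>)" for \<theta>
    by (metis L_NSM_expfam[OF assms] distrib_left mult.assoc)
  have "post_NSM \<beta> w (expfam T b) \<mu> \<Sigma> n ys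
      = gibbs (\<lambda>\<theta>. \<beta> * real n * L_NSM w (expfam T b) n ys \<theta>) (gauss_unnorm \<mu> \<Sigma>)"
    by (simp add: fun_eq_iff post_NSM_def gibbs_def)
  then show ?thesis unfolding shift gibbs_add_const .
qed

lemma continuous_on_nsm_quadratic: "continuous_on UNIV (nsm_quadratic w T b z)"
  unfolding nsm_quadratic_def vector_matrix_mult_def by (intro continuous_intros)

section \<open>Bounds from (A5)\<close>

lemma norm_matrix_vector_mult_le:
  fixes A :: "real^'n::finite^'m::finite"
  shows "norm (A *v x) \<le> norm A * norm x"
proof -
  have "norm (A *v x) \<le> norm (\<chi> i. norm (A $ i) * norm x)"
  proof (rule norm_le_componentwise_cart)
    fix i
    have "(A *v x) $ i = A $ i \<bullet> x" by (simp add: matrix_vector_mult_def inner_vec_def)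
    then show "norm ((A *v x) $ i) \<le> norm ((\<chi> i. norm (A $ i) * norm x) $ i)"
      using Cauchy_Schwarz_ineq2[of "A $ i" x] by simp
  qed
  also have "(\<chi> i. norm (A $ i) * norm x) = norm x *\<^sub>R (\<chi> i. norm (A $ i))"
    by (simp add: vec_eq_iff)
  also have "norm (norm x *\<^sub>R (\<chi> i. norm (A $ i))) = norm A * norm x"
  proof -
    have "norm (\<chi> i. norm (A $ i)) = norm A"
      by (simp add: norm_vec_def)
    then show ?thesis by simp
  qed
  finally show ?thesis .
qed

lemma inner_vector_matrix_mult_le:
  fixes A :: "real^'n::finite^'m::finite"
  shows "\<bar>(\<theta> v* A) \<bullet> v\<bar> \<le> norm \<theta> * norm A * norm v"
proof -
  have "\<bar>(\<theta> v* A) \<bullet> v\<bar> \<le> norm \<theta> * norm (A *v v)"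
    unfolding dot_lmul_matrix by (rule Cauchy_Schwarz_ineq2)
  also have "\<dots> \<le> norm \<theta> * (norm A * norm v)"
    by (intro mult_left_mono norm_matrix_vector_mult_le) simp
  finally show ?thesis by (simp only: mult.assoc)
qed

lemma norm_vector_matrix_mult_le:
  fixes A :: "real^'n::finite^'m::finite"
  shows "norm (\<theta> v* A) \<le> norm \<theta> * norm A"
proof (cases "\<theta> v* A = 0")
  case False
  have "(norm (\<theta> v* A))\<^sup>2 = (\<theta> v* A) \<bullet> (\<theta> v* A)" by (rule power2_norm_eq_inner)
  also have "\<dots> \<le> norm \<theta> * norm A * norm (\<theta> v* A)"
    using inner_vector_matrix_mult_le[of \<theta> A "\<theta> v* A"] by linarith
  finally have "norm (\<theta> v* A) * norm (\<theta> v* A) \<le> (norm \<theta> * norm A) * norm (\<theta> v* A)"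
    by (simp only: power2_eq_square)
  then show ?thesis using False by (simp add: mult_le_cancel_right_pos)
qed simp

lemma norm_lap_components_le:
  fixes T :: "real^'n::finite \<Rightarrow> real^'m::finite"
  shows "norm (\<chi> k. lap (\<lambda>x. T x $ k) z) \<le> real CARD('m) * real CARD('n) * norm (hess_arr T z)"
proof -
  have entry: "\<bar>pd j (pd j (\<lambda>x. T x $ k)) z\<bar> \<le> norm (hess_arr T z)" for k j
  proof -
    have "\<bar>pd j (pd j (\<lambda>x. T x $ k)) z\<bar> \<le> norm (hess_arr T z $ k $ j)"
      using component_le_norm_cart[of "hess_arr T z $ k $ j" j] by (simp add: hess_arr_def)
    also have "\<dots> \<le> norm (hess_arr T z)"
      using Finite_Cartesian_Product.norm_nth_le[of "hess_arr T z $ k" j]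
        Finite_Cartesian_Product.norm_nth_le[of "hess_arr T z" k] by linarith
    finally show ?thesis .
  qed
  have "\<bar>lap (\<lambda>x. T x $ k) z\<bar> \<le> real CARD('n) * norm (hess_arr T z)" for k
  proof -
    have "\<bar>lap (\<lambda>x. T x $ k) z\<bar> \<le> (\<Sum>j\<in>UNIV. \<bar>pd j (pd j (\<lambda>x. T x $ k)) z\<bar>)"
      unfolding lap_def by (rule sum_abs)
    also have "\<dots> \<le> (\<Sum>j\<in>(UNIV::'n set). norm (hess_arr T z))" by (intro sum_mono entry)
    finally show ?thesis by simp
  qed
  then have "norm (\<chi> k. lap (\<lambda>x. T x $ k) z) \<le> (\<Sum>k\<in>(UNIV::'m set). real CARD('n) * norm (hess_arr T z))"
    by (intro order_trans[OF norm_le_l1_cart] sum_mono) simp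
  then show ?thesis by simp
qed

lemma mult_sqrt_le_imp_sq_le:
  fixes W p C :: real
  assumes "0 \<le> W" "0 \<le> p" "W * sqrt p \<le> C"
  shows "W\<^sup>2 * p \<le> C\<^sup>2"
proof -
  have "(W * sqrt p)\<^sup>2 \<le> C\<^sup>2" using assms by (intro power_mono) auto
  then show ?thesis using assms by (simp add: power_mult_distrib)
qed

lemma nsm_quadratic_minus_square_le:
  fixes T :: "real^'n::finite \<Rightarrow> real^'m::finite"
  assumes W: "0 \<le> w z"
    and JB: "(w z)\<^sup>2 * (norm (jac T z) * norm (grad b z)) \<le> C\<^sup>2"
    and H: "(w z)\<^sup>2 * norm (hess_arr T z) \<le> C\<^sup>2"
    and JW: "norm (jac T z) * norm (grad (\<lambda>y. (w y)\<^sup>2) z) \<le> C'"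
  shows "\<bar>nsm_quadratic w T b z \<theta> - (w z)\<^sup>2 * (norm (\<theta> v* jac T z))\<^sup>2\<bar>
           \<le> 2 * ((1 + real CARD('m) * real CARD('n)) * C\<^sup>2 + C') * norm \<theta>"
proof -
  define U where "U = \<theta> v* jac T z"
  define t where "t = norm \<theta>"
  define D where "D = real CARD('m) * real CARD('n)"
  have t: "0 \<le> t" unfolding t_def by simp
  have lin_b: "\<bar>(w z)\<^sup>2 * (2 * (U \<bullet> grad b z))\<bar> \<le> 2 * (C\<^sup>2 * t)"
  proof -
    have "(w z)\<^sup>2 * \<bar>U \<bullet> grad b z\<bar> \<le> (w z)\<^sup>2 * (t * norm (jac T z) * norm (grad b z))"
      unfolding U_def t_def by (intro mult_left_mono inner_vector_matrix_mult_le) simp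
    also have "\<dots> = t * ((w z)\<^sup>2 * (norm (jac T z) * norm (grad b z)))" by (simp only: ac_simps)
    also have "\<dots> \<le> t * C\<^sup>2" using JB t by (rule mult_left_mono)
    finally show ?thesis by (simp add: abs_mult mult.commute)
  qed
  have lin_w: "\<bar>2 * (grad (\<lambda>x. (w x)\<^sup>2) z \<bullet> U)\<bar> \<le> 2 * (C' * t)"
  proof -
    have "\<bar>U \<bullet> grad (\<lambda>x. (w x)\<^sup>2) z\<bar> \<le> t * (norm (jac T z) * norm (grad (\<lambda>x. (w x)\<^sup>2) z))"
      unfolding U_def t_def using inner_vector_matrix_mult_le by (simp add: mult.assoc)
    also have "\<dots> \<le> t * C'" using JW t by (rule mult_left_mono)
    finally show ?thesis by (simp add: inner_commute mult.commute)
  qed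
  have lin_lap: "\<bar>2 * (w z)\<^sup>2 * (\<theta> \<bullet> (\<chi> k. lap (\<lambda>x. T x $ k) z))\<bar> \<le> 2 * (D * C\<^sup>2 * t)"
  proof -
    have "\<bar>\<theta> \<bullet> (\<chi> k. lap (\<lambda>x. T x $ k) z)\<bar> \<le> t * (D * norm (hess_arr T z))"
      unfolding t_def D_def
      by (rule order_trans[OF Cauchy_Schwarz_ineq2 mult_left_mono[OF norm_lap_components_le]]) simp
    then have "(w z)\<^sup>2 * \<bar>\<theta> \<bullet> (\<chi> k. lap (\<lambda>x. T x $ k) z)\<bar> \<le> (w z)\<^sup>2 * (t * (D * norm (hess_arr T z)))"
      by (rule mult_left_mono) simp
    also have "\<dots> = t * D * ((w z)\<^sup>2 * norm (hess_arr T z))" by (simp only: ac_simps)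
    also have "\<dots> \<le> t * D * C\<^sup>2" using H t by (simp add: D_def mult_left_mono)
    finally show ?thesis by (simp add: abs_mult algebra_simps)
  qed
  have "nsm_quadratic w T b z \<theta> - (w z)\<^sup>2 * (norm U)\<^sup>2 = (w z)\<^sup>2 * (2 * (U \<bullet> grad b z))
      + 2 * (grad (\<lambda>x. (w x)\<^sup>2) z \<bullet> U) + 2 * (w z)\<^sup>2 * (\<theta> \<bullet> (\<chi> k. lap (\<lambda>x. T x $ k) z))"
    unfolding nsm_quadratic_def U_def by (simp only: distrib_left)
  moreover have "2 * ((1 + D) * C\<^sup>2 + C') * t = 2 * (C\<^sup>2 * t) + 2 * (C' * t) + 2 * (D * C\<^sup>2 * t)"
    by (simp add: algebra_simps)
  ultimately show ?thesis
    unfolding U_def[symmetric] t_def[symmetric] D_def[symmetric] using lin_b lin_w lin_lap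
    by (simp only: abs_le_iff) linarith
qed

lemma nsm_quadratic_bounds:
  fixes T :: "real^'n::finite \<Rightarrow> real^'m::finite"
  assumes W: "0 \<le> w z"
    and JB: "(w z)\<^sup>2 * (norm (jac T z) * norm (grad b z)) \<le> C\<^sup>2"
    and H: "(w z)\<^sup>2 * norm (hess_arr T z) \<le> C\<^sup>2"
    and J: "w z * norm (jac T z) \<le> C"
    and JW: "norm (jac T z) * norm (grad (\<lambda>y. (w y)\<^sup>2) z) \<le> C'"
  defines "K \<equiv> (3 + 2 * real CARD('m) * real CARD('n)) * C\<^sup>2 + 2 * C'"
  shows "- K * norm \<theta> \<le> nsm_quadratic w T b z \<theta> \<and> nsm_quadratic w T b z \<theta> \<le> K * (norm \<theta> + (norm \<theta>)\<^sup>2)"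
proof -
  define t where "t = norm \<theta>"
  define D where "D = real CARD('m) * real CARD('n)"
  have t: "0 \<le> t" unfolding t_def by simp
  have "w z * norm (\<theta> v* jac T z) \<le> w z * (t * norm (jac T z))"
    unfolding t_def using norm_vector_matrix_mult_le W by (rule mult_left_mono)
  also have "\<dots> \<le> t * C" using J t by (simp add: mult.left_commute mult_left_mono)
  finally have "(w z * norm (\<theta> v* jac T z))\<^sup>2 \<le> (t * C)\<^sup>2" using W by (intro power_mono) auto
  then have square: "(w z)\<^sup>2 * (norm (\<theta> v* jac T z))\<^sup>2 \<le> C\<^sup>2 * t\<^sup>2"
    by (simp add: power_mult_distrib mult.commute)
  have C': "0 \<le> C'" by (meson JW mult_nonneg_nonneg norm_ge_zero order_trans)
  have "K * t = 2 * ((1 + D) * C\<^sup>2 + C') * t + C\<^sup>2 * t"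
    and "K * t\<^sup>2 = C\<^sup>2 * t\<^sup>2 + 2 * ((1 + D) * C\<^sup>2 + C') * t\<^sup>2"
    unfolding K_def D_def by (simp_all add: algebra_simps)
  moreover have "0 \<le> C\<^sup>2 * t" "0 \<le> 2 * ((1 + D) * C\<^sup>2 + C') * t\<^sup>2"
    "0 \<le> (w z)\<^sup>2 * (norm (\<theta> v* jac T z))\<^sup>2"
    using t C' by (simp_all add: D_def)
  ultimately show ?thesis
    using nsm_quadratic_minus_square_le[OF W JB H JW, of \<theta>] square
    unfolding t_def[symmetric] D_def[symmetric] distrib_left by (simp only: abs_le_iff) linarith
qed

lemma nsm_quadratic_uniform_bounds:
  fixes T :: "real^'n::finite \<Rightarrow> real^'m::finite"
  assumes w_nonneg: "\<forall>x. w x \<ge> 0"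
    and A5a: "\<forall>x. w x * max (sqrt (norm (jac T x) * norm (grad b x)))
                          (max (sqrt (norm (hess_arr T x))) (norm (jac T x))) \<le> C"
    and A5b: "\<forall>x. norm (jac T x) * norm (grad (\<lambda>y. (w y)\<^sup>2) x) \<le> C'"
  shows "\<exists>K\<ge>0. \<forall>z \<theta>. - K * norm \<theta> \<le> nsm_quadratic w T b z \<theta>
                    \<and> nsm_quadratic w T b z \<theta> \<le> K * (norm \<theta> + (norm \<theta>)\<^sup>2)"
proof -
  define K where "K = (3 + 2 * real CARD('m) * real CARD('n)) * C\<^sup>2 + 2 * C'"
  have "0 \<le> C'" using A5b by (meson mult_nonneg_nonneg norm_ge_zero order_trans)
  then have "0 \<le> K" unfolding K_def by (intro add_nonneg_nonneg mult_nonneg_nonneg) auto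
  moreover have "- K * norm \<theta> \<le> nsm_quadratic w T b z \<theta> \<and> nsm_quadratic w T b z \<theta> \<le> K * (norm \<theta> + (norm \<theta>)\<^sup>2)"
    for z \<theta>
  proof -
    have W: "0 \<le> w z" using w_nonneg by blast
    have "w z * sqrt (norm (jac T z) * norm (grad b z)) \<le> C" "w z * sqrt (norm (hess_arr T z)) \<le> C"
      "w z * norm (jac T z) \<le> C"
      using A5a[rule_format, of z] W by (meson max.cobounded1 max.cobounded2 mult_left_mono order_trans)+
    then show ?thesis unfolding K_def
      by (intro nsm_quadratic_bounds W mult_sqrt_le_imp_sq_le A5b[rule_format]) simp_all
  qed
  ultimately show ?thesis by blast
qed

section \<open>Replacing one observation\<close>

lemma sum_fun_upd_eq:
  fixes f :: "'a \<Rightarrow> 'b::ab_group_add"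
  assumes "finite I" "j \<in> I"
  shows "(\<Sum>i\<in>I. f ((g(j := y)) i)) = (\<Sum>i\<in>I. f (g i)) - f (g j) + f y"
proof -
  have "(\<Sum>i\<in>I. f ((g(j := y)) i)) = f y + (\<Sum>i\<in>I - {j}. f (g i))"
    using assms by (simp add: sum.remove)
  moreover have "(\<Sum>i\<in>I. f (g i)) = f (g j) + (\<Sum>i\<in>I - {j}. f (g i))"
    using assms by (simp add: sum.remove)
  ultimately show ?thesis by (simp add: algebra_simps)
qed

lemma sum_replace_one_bounds:
  fixes q :: "'x \<Rightarrow> 'a::real_normed_vector \<Rightarrow> real" and xs :: "nat \<Rightarrow> 'x"
  assumes j: "j \<in> {1..n}" and \<beta>: "\<beta> > 0" and K: "0 \<le> K"
    and q_lower: "\<And>z \<theta>. - K * norm \<theta> \<le> q z \<theta>"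
    and q_upper: "\<And>z \<theta>. q z \<theta> \<le> K * (norm \<theta> + (norm \<theta>)\<^sup>2)"
  defines "V y \<theta> \<equiv> \<beta> * (\<Sum>i=1..n. q ((xs(j := y)) i) \<theta>)"
  shows "- (\<beta> * real n * K) * norm \<theta> \<le> V y \<theta>"
    and "\<bar>V y \<theta> - V (xs j) \<theta>\<bar> \<le> 2 * \<beta> * K * (norm \<theta> + (norm \<theta>)\<^sup>2)"
proof -
  have "real n * (- K * norm \<theta>) \<le> (\<Sum>i=1..n. q ((xs(j := y)) i) \<theta>)"
    using sum_mono[of "{1..n}" "\<lambda>_. - K * norm \<theta>", OF q_lower] by simp
  then have "\<beta> * (real n * (- K * norm \<theta>)) \<le> V y \<theta>"
    unfolding V_def using \<beta> by (intro mult_left_mono) auto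
  then show "- (\<beta> * real n * K) * norm \<theta> \<le> V y \<theta>" by (simp add: algebra_simps)
  have upd: "(\<Sum>i=1..n. q ((xs(j := y)) i) \<theta>) = (\<Sum>i=1..n. q (xs i) \<theta>) - q (xs j) \<theta> + q y \<theta>"
    using j by (intro sum_fun_upd_eq) auto
  have "V y \<theta> - V (xs j) \<theta> = \<beta> * (q y \<theta> - q (xs j) \<theta>)"
    unfolding V_def fun_upd_triv upd by (simp add: algebra_simps)
  moreover have "K * norm \<theta> \<le> K * (norm \<theta> + (norm \<theta>)\<^sup>2)" using K by (intro mult_left_mono) auto
  then have "\<bar>q y \<theta> - q (xs j) \<theta>\<bar> \<le> 2 * K * (norm \<theta> + (norm \<theta>)\<^sup>2)"
    using q_lower[where z=y and \<theta>=\<theta>] q_upper[where z=y and \<theta>=\<theta>]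
      q_lower[where z="xs j" and \<theta>=\<theta>] q_upper[where z="xs j" and \<theta>=\<theta>] by linarith
  ultimately show "\<bar>V y \<theta> - V (xs j) \<theta>\<bar> \<le> 2 * \<beta> * K * (norm \<theta> + (norm \<theta>)\<^sup>2)"
    using \<beta> by (simp add: abs_mult mult.assoc mult_left_mono)
qed

theorem theorem4p6:
  fixes \<beta> :: real and n j :: nat and xo :: "nat \<Rightarrow> real^'dx"
    and \<mu> :: "real^'dt" and \<Sigma> :: "real^'dt^'dt"
    and w :: "real^'dx \<Rightarrow> real" and T :: "real^'dx \<Rightarrow> real^'dt" and b :: "real^'dx \<Rightarrow> real"
    and C C' :: real
  assumes beta_pos: "\<beta> > 0"
    and Sigma_pd: "pos_def \<Sigma>"
    and j_range: "j \<in> {1..n}"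
    (* A1 *)
    and w_nonneg: "\<forall>x. w x \<ge> 0"
    and w_C2: "twice_cont_differentiable w"
    and w_bdd: "bdd_above (range w)"
    and grad_w_bdd: "bdd_above (range (\<lambda>x. norm (grad w x)))"
    (* A3 *)
    and T_C2: "twice_differentiable_vec T"
    and b_C2: "twice_differentiable b"
    and q_density: "\<forall>\<theta>. integrable lborel (\<lambda>x. exp (T x \<bullet> \<theta> + b x))"
    (* A5 *)
    and C_nonneg: "C \<ge> 0" and C'_nonneg: "C' \<ge> 0"
    and A5a: "\<forall>x. w x * max (sqrt (norm (jac T x) * norm (grad b x)))
                          (max (sqrt (norm (hess_arr T x))) (norm (jac T x))) \<le> C"
    and A5b: "\<forall>x. norm (jac T x) * norm (grad (\<lambda>y. (w y)^2) x) \<le> C'"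
  shows "(SUP xc. KL (post_NSM \<beta> w (expfam T b) \<mu> \<Sigma> n xo)
                     (post_NSM \<beta> w (expfam T b) \<mu> \<Sigma> n (xo(j := xc)))) < \<infinity>"
proof -
  obtain K where K: "0 \<le> K" "\<And>z \<theta>. - K * norm \<theta> \<le> nsm_quadratic w T b z \<theta>"
      "\<And>z \<theta>. nsm_quadratic w T b z \<theta> \<le> K * (norm \<theta> + (norm \<theta>)\<^sup>2)"
    using nsm_quadratic_uniform_bounds[OF w_nonneg A5a A5b] by blast
  obtain a A where a: "a > 0" and gauss: "\<And>\<theta>. gauss_unnorm \<mu> \<Sigma> \<theta> \<le> A * exp (- a * (norm \<theta>)\<^sup>2)"
    using gauss_unnorm_le_gaussian[OF Sigma_pd] by blast
  define V where "V y \<theta> = \<beta> * (\<Sum>i=1..n. nsm_quadratic w T b ((xo(j := y)) i) \<theta>)" for y \<theta>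
  have post: "post_NSM \<beta> w (expfam T b) \<mu> \<Sigma> n (xo(j := y)) = gibbs (V y) (gauss_unnorm \<mu> \<Sigma>)" for y
    unfolding V_def using j_range by (intro post_NSM_expfam T_C2 b_C2 q_density) simp
  have V_lower: "- (\<beta> * real n * K) * norm \<theta> \<le> V y \<theta>" for y \<theta>
    unfolding V_def by (rule sum_replace_one_bounds(1)[OF j_range beta_pos K])
  have V_diff: "\<bar>V y \<theta> - V (xo j) \<theta>\<bar> \<le> 2 * \<beta> * K * (norm \<theta> + (norm \<theta>)\<^sup>2)" for y \<theta>
    unfolding V_def by (rule sum_replace_one_bounds(2)[OF j_range beta_pos K])
  have V_cont: "continuous_on UNIV (V y)" for y
    unfolding V_def by (intro continuous_intros continuous_on_nsm_quadratic)
  have gauss_pos: "gauss_unnorm \<mu> \<Sigma> \<theta> > 0" for \<theta> by (simp add: gauss_unnorm_def)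
  obtain R where "\<forall>y. KL (gibbs (V (xo j)) (gauss_unnorm \<mu> \<Sigma>)) (gibbs (V y) (gauss_unnorm \<mu> \<Sigma>)) \<le> ereal R"
    using KL_gibbs_uniformly_bounded[where g="gauss_unnorm \<mu> \<Sigma>" and V=V and y\<^sub>0="xo j",
        OF a continuous_on_gauss_unnorm gauss_pos gauss V_cont V_lower V_diff]
    by blast
  then have "(SUP xc. KL (post_NSM \<beta> w (expfam T b) \<mu> \<Sigma> n xo)
                        (post_NSM \<beta> w (expfam T b) \<mu> \<Sigma> n (xo(j := xc)))) \<le> ereal R"
    using post[of "xo j"] by (simp add: post SUP_least)
  then show ?thesis by (rule le_less_trans) simp
qed

end
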